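(* Let $P:\mathcal C^{op}\to\mathbf{Heyt}$ be a weak hyperdoctrine with full weak comprehensions and comprehensive diagonals, and suppose $\Psi_{\mathcal C}$ is a weak hyperdoctrine. Then for every $\alpha\in P(X\times Y)$ and all $\gamma,\beta\in P(A)$: $\{\forall^P_{pr_1}(\alpha)\}=\forall^{\Psi_{\mathcal C}}_{pr_1}\{\alpha\}$ and $\{\gamma\Rightarrow^P\beta\}=\{\gamma\}\Rightarrow^{\Psi_{\mathcal C}}\{\beta\}$ as elements of $\Psi_{\mathcal C}(X)$, resp. $\Psi_{\mathcal C}(A)$. If moreover the comprehensions are strong (monic) and $\mathrm{Sub}_{\mathcal C}$ is a weak hyperdoctrine, the same equalities hold with $\mathrm{Sub}_{\mathcal C}$ in place of $\Psi_{\mathcal C}$.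
   Context: A weak hyperdoctrine is an elementary doctrine (equality predicates $\delta_A$, written $=_A$) over a weakly cartesian closed base with Heyting fibres and reindexing, and left and right adjoints $\exists_{pr_1},\forall_{pr_1}$ to reindexing along product projections $pr_1:X\times Y\to X$ satisfying Beck–Chevalley. A weak comprehension of $\alpha\in P(A)$ is an arrow $\{\alpha\}:Z\to A$ with $\top\le P_{\{\alpha\}}(\alpha)$ through which every $f$ with $\top\le P_f(\alpha)$ factors (not necessarily uniquely); it is strong if $\{\alpha\}$ is monic; full weak comprehensions: all exist and $\alpha\le\beta$ whenever $\{\alpha\}$ factors through $\{\beta\}$. Comprehensive diagonals: $f=g$ whenever $\top\vdash f(x)=_Yg(x)$. $\Psi_{\mathcal C}$ sends $A$ to the poset reflection of $\mathcal C/A$, reindexing by weak pullback; $\mathrm{Sub}_{\mathcal C}$ is the subobject doctrine. In the equalities, $\{\alpha\}$ denotes the class $[\{\alpha\}]$ in $\Psi_{\mathcal C}$ (resp. the subobject in $\mathrm{Sub}_{\mathcal C}$), and superscripts indicate in which doctrine the operation is computed. *)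

theory Defs
  imports Main
begin

record ('o, 'm) wcat =
  obj  :: "'o set"
  arr  :: "'m set"
  cdom :: "'m \<Rightarrow> 'o"
  ccod :: "'m \<Rightarrow> 'o"
  idt  :: "'o \<Rightarrow> 'm"
  comp :: "'m \<Rightarrow> 'm \<Rightarrow> 'm"      (* comp C g f = g \<circ> f *)
  prd  :: "'o \<Rightarrow> 'o \<Rightarrow> 'o"
  pr1  :: "'o \<Rightarrow> 'o \<Rightarrow> 'm"
  pr2  :: "'o \<Rightarrow> 'o \<Rightarrow> 'm"
  trm  :: "'o"
  exo  :: "'o \<Rightarrow> 'o \<Rightarrow> 'o"
  evl  :: "'o \<Rightarrow> 'o \<Rightarrow> 'm"

definition hom :: "('o,'m,'x) wcat_scheme \<Rightarrow> 'o \<Rightarrow> 'o \<Rightarrow> 'm set" where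
  "hom C A B = {f \<in> arr C. cdom C f = A \<and> ccod C f = B}"

definition category :: "('o,'m,'x) wcat_scheme \<Rightarrow> bool" where
  "category C \<longleftrightarrow>
     (\<forall>f\<in>arr C. cdom C f \<in> obj C \<and> ccod C f \<in> obj C) \<and>
     (\<forall>A\<in>obj C. idt C A \<in> hom C A A) \<and>
     (\<forall>f g. f \<in> arr C \<and> g \<in> arr C \<and> ccod C f = cdom C g
         \<longrightarrow> comp C g f \<in> hom C (cdom C f) (ccod C g)) \<and>
     (\<forall>f\<in>arr C. comp C f (idt C (cdom C f)) = f \<and> comp C (idt C (ccod C f)) f = f) \<and>
     (\<forall>f g h. f \<in> arr C \<and> g \<in> arr C \<and> h \<in> arr C \<and> ccod C f = cdom C g \<and> ccod C g = cdom C h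
         \<longrightarrow> comp C h (comp C g f) = comp C (comp C h g) f)"

definition has_products :: "('o,'m,'x) wcat_scheme \<Rightarrow> bool" where
  "has_products C \<longleftrightarrow>
     trm C \<in> obj C \<and> (\<forall>A\<in>obj C. \<exists>!t. t \<in> hom C A (trm C)) \<and>
     (\<forall>A\<in>obj C. \<forall>B\<in>obj C.
        prd C A B \<in> obj C \<and> pr1 C A B \<in> hom C (prd C A B) A \<and> pr2 C A B \<in> hom C (prd C A B) B \<and>
        (\<forall>Z f g. f \<in> hom C Z A \<and> g \<in> hom C Z B \<longrightarrow>
           (\<exists>!h. h \<in> hom C Z (prd C A B) \<and> comp C (pr1 C A B) h = f \<and> comp C (pr2 C A B) h = g)))"

definition pair :: "('o,'m,'x) wcat_scheme \<Rightarrow> 'm \<Rightarrow> 'm \<Rightarrow> 'm" where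
  "pair C f g = (THE h. h \<in> hom C (cdom C f) (prd C (ccod C f) (ccod C g)) \<and>
        comp C (pr1 C (ccod C f) (ccod C g)) h = f \<and> comp C (pr2 C (ccod C f) (ccod C g)) h = g)"

definition cross :: "('o,'m,'x) wcat_scheme \<Rightarrow> 'm \<Rightarrow> 'm \<Rightarrow> 'm" where
  "cross C f g = pair C (comp C f (pr1 C (cdom C f) (cdom C g))) (comp C g (pr2 C (cdom C f) (cdom C g)))"

definition has_weak_exponentials :: "('o,'m,'x) wcat_scheme \<Rightarrow> bool" where
  "has_weak_exponentials C \<longleftrightarrow>
     (\<forall>B\<in>obj C. \<forall>D\<in>obj C. exo C B D \<in> obj C \<and> evl C B D \<in> hom C (prd C (exo C B D) B) D \<and>
        (\<forall>A f. f \<in> hom C (prd C A B) D \<longrightarrow>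
           (\<exists>h\<in>hom C A (exo C B D). comp C (evl C B D) (cross C h (idt C B)) = f)))"

definition weakly_cc :: "('o,'m,'x) wcat_scheme \<Rightarrow> bool" where
  "weakly_cc C \<longleftrightarrow> category C \<and> has_products C \<and> has_weak_exponentials C"

definition factors :: "('o,'m,'x) wcat_scheme \<Rightarrow> 'm \<Rightarrow> 'm \<Rightarrow> bool" where
  "factors C g f \<longleftrightarrow> (\<exists>h\<in>arr C. cdom C h = cdom C g \<and> ccod C h = cdom C f \<and> comp C f h = g)"

definition monic :: "('o,'m,'x) wcat_scheme \<Rightarrow> 'm \<Rightarrow> bool" where
  "monic C m \<longleftrightarrow> m \<in> arr C \<and>
     (\<forall>f\<in>arr C. \<forall>g\<in>arr C. ccod C f = cdom C m \<and> ccod C g = cdom C m \<and> cdom C f = cdom C g \<and>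
        comp C m f = comp C m g \<longrightarrow> f = g)"

definition is_wpb :: "('o,'m,'x) wcat_scheme \<Rightarrow> 'm \<Rightarrow> 'm \<Rightarrow> 'm \<Rightarrow> 'm \<Rightarrow> bool" where
  "is_wpb C f g p q \<longleftrightarrow>
     f \<in> arr C \<and> g \<in> arr C \<and> ccod C f = ccod C g \<and> p \<in> arr C \<and> q \<in> arr C \<and>
     cdom C p = cdom C q \<and> ccod C p = cdom C f \<and> ccod C q = cdom C g \<and> comp C f p = comp C g q \<and>
     (\<forall>p' q'. p' \<in> arr C \<and> q' \<in> arr C \<and> cdom C p' = cdom C q' \<and> ccod C p' = cdom C f \<and>
        ccod C q' = cdom C g \<and> comp C f p' = comp C g q' \<longrightarrow>
        (\<exists>h\<in>arr C. cdom C h = cdom C p' \<and> ccod C h = cdom C p \<and> comp C p h = p' \<and> comp C q h = q'))"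

definition is_pb :: "('o,'m,'x) wcat_scheme \<Rightarrow> 'm \<Rightarrow> 'm \<Rightarrow> 'm \<Rightarrow> 'm \<Rightarrow> bool" where
  "is_pb C f g p q \<longleftrightarrow>
     f \<in> arr C \<and> g \<in> arr C \<and> ccod C f = ccod C g \<and> p \<in> arr C \<and> q \<in> arr C \<and>
     cdom C p = cdom C q \<and> ccod C p = cdom C f \<and> ccod C q = cdom C g \<and> comp C f p = comp C g q \<and>
     (\<forall>p' q'. p' \<in> arr C \<and> q' \<in> arr C \<and> cdom C p' = cdom C q' \<and> ccod C p' = cdom C f \<and>
        ccod C q' = cdom C g \<and> comp C f p' = comp C g q' \<longrightarrow>
        (\<exists>!h. h \<in> arr C \<and> cdom C h = cdom C p' \<and> ccod C h = cdom C p \<and> comp C p h = p' \<and> comp C q h = q'))"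

definition has_weak_pullbacks :: "('o,'m,'x) wcat_scheme \<Rightarrow> bool" where
  "has_weak_pullbacks C \<longleftrightarrow>
     (\<forall>f\<in>arr C. \<forall>g\<in>arr C. ccod C f = ccod C g \<longrightarrow> (\<exists>p q. is_wpb C f g p q))"

definition has_mono_pullbacks :: "('o,'m,'x) wcat_scheme \<Rightarrow> bool" where
  "has_mono_pullbacks C \<longleftrightarrow>
     (\<forall>f\<in>arr C. \<forall>m. monic C m \<and> ccod C f = ccod C m \<longrightarrow> (\<exists>p q. is_pb C f m p q))"

text \<open>A doctrine: poset fibres \<open>fib A\<close> ordered by \<open>leq A\<close>, reindexing \<open>re f = P_f\<close>.\<close>
record ('o, 'm, 'p) doct =
  fib :: "'o \<Rightarrow> 'p set"
  leq :: "'o \<Rightarrow> 'p \<Rightarrow> 'p \<Rightarrow> bool"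
  re  :: "'m \<Rightarrow> 'p \<Rightarrow> 'p"

record ('o, 'p) hops =
  htop  :: "'o \<Rightarrow> 'p"
  hbot  :: "'o \<Rightarrow> 'p"
  hmeet :: "'o \<Rightarrow> 'p \<Rightarrow> 'p \<Rightarrow> 'p"
  hjoin :: "'o \<Rightarrow> 'p \<Rightarrow> 'p \<Rightarrow> 'p"
  himp  :: "'o \<Rightarrow> 'p \<Rightarrow> 'p \<Rightarrow> 'p"
  hex   :: "'o \<Rightarrow> 'o \<Rightarrow> 'p \<Rightarrow> 'p"   (* hex X Y : P(X\<times>Y) \<rightarrow> P(X), = \<exists>_{pr_1} *)
  hall  :: "'o \<Rightarrow> 'o \<Rightarrow> 'p \<Rightarrow> 'p"   (* hall X Y : P(X\<times>Y) \<rightarrow> P(X), = \<forall>_{pr_1} *)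
  heq   :: "'o \<Rightarrow> 'p"                (* heq A = \<delta>_A \<in> P(A\<times>A) *)

definition doctrine :: "('o,'m,'x) wcat_scheme \<Rightarrow> ('o,'m,'p) doct \<Rightarrow> bool" where
  "doctrine C P \<longleftrightarrow>
     (\<forall>A\<in>obj C.
        (\<forall>a\<in>fib P A. leq P A a a) \<and>
        (\<forall>a\<in>fib P A. \<forall>b\<in>fib P A. leq P A a b \<and> leq P A b a \<longrightarrow> a = b) \<and>
        (\<forall>a\<in>fib P A. \<forall>b\<in>fib P A. \<forall>c\<in>fib P A. leq P A a b \<and> leq P A b c \<longrightarrow> leq P A a c)) \<and>
     (\<forall>f\<in>arr C. \<forall>a\<in>fib P (ccod C f). re P f a \<in> fib P (cdom C f)) \<and>
     (\<forall>f\<in>arr C. \<forall>a\<in>fib P (ccod C f). \<forall>b\<in>fib P (ccod C f).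
        leq P (ccod C f) a b \<longrightarrow> leq P (cdom C f) (re P f a) (re P f b)) \<and>
     (\<forall>A\<in>obj C. \<forall>a\<in>fib P A. re P (idt C A) a = a) \<and>
     (\<forall>f\<in>arr C. \<forall>g\<in>arr C. ccod C f = cdom C g \<longrightarrow>
        (\<forall>a\<in>fib P (ccod C g). re P (comp C g f) a = re P f (re P g a)))"

definition heyting_fibres :: "('o,'m,'x) wcat_scheme \<Rightarrow> ('o,'m,'p) doct \<Rightarrow> ('o,'p) hops \<Rightarrow> bool" where
  "heyting_fibres C P H \<longleftrightarrow>
     (\<forall>A\<in>obj C.
        htop H A \<in> fib P A \<and> hbot H A \<in> fib P A \<and>
        (\<forall>a\<in>fib P A. \<forall>b\<in>fib P A. hmeet H A a b \<in> fib P A \<and> hjoin H A a b \<in> fib P A \<and> himp H A a b \<in> fib P A) \<and>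
        (\<forall>a\<in>fib P A. leq P A a (htop H A) \<and> leq P A (hbot H A) a) \<and>
        (\<forall>a\<in>fib P A. \<forall>b\<in>fib P A. \<forall>c\<in>fib P A.
           (leq P A c (hmeet H A a b) \<longleftrightarrow> leq P A c a \<and> leq P A c b) \<and>
           (leq P A (hjoin H A a b) c \<longleftrightarrow> leq P A a c \<and> leq P A b c) \<and>
           (leq P A c (himp H A a b) \<longleftrightarrow> leq P A (hmeet H A c a) b))) \<and>
     (\<forall>f\<in>arr C.
        re P f (htop H (ccod C f)) = htop H (cdom C f) \<and>
        re P f (hbot H (ccod C f)) = hbot H (cdom C f) \<and>
        (\<forall>a\<in>fib P (ccod C f). \<forall>b\<in>fib P (ccod C f).
           re P f (hmeet H (ccod C f) a b) = hmeet H (cdom C f) (re P f a) (re P f b) \<and>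
           re P f (hjoin H (ccod C f) a b) = hjoin H (cdom C f) (re P f a) (re P f b) \<and>
           re P f (himp H (ccod C f) a b) = himp H (cdom C f) (re P f a) (re P f b)))"

definition has_quantifiers :: "('o,'m,'x) wcat_scheme \<Rightarrow> ('o,'m,'p) doct \<Rightarrow> ('o,'p) hops \<Rightarrow> bool" where
  "has_quantifiers C P H \<longleftrightarrow>
     (\<forall>X\<in>obj C. \<forall>Y\<in>obj C. \<forall>a\<in>fib P (prd C X Y).
        hex H X Y a \<in> fib P X \<and> hall H X Y a \<in> fib P X \<and>
        (\<forall>b\<in>fib P X. leq P X (hex H X Y a) b \<longleftrightarrow> leq P (prd C X Y) a (re P (pr1 C X Y) b)) \<and>
        (\<forall>b\<in>fib P X. leq P X b (hall H X Y a) \<longleftrightarrow> leq P (prd C X Y) (re P (pr1 C X Y) b) a) \<and>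
        (\<forall>f\<in>arr C. ccod C f = X \<longrightarrow>
           re P f (hex H X Y a) = hex H (cdom C f) Y (re P (cross C f (idt C Y)) a) \<and>
           re P f (hall H X Y a) = hall H (cdom C f) Y (re P (cross C f (idt C Y)) a)))"

definition elementary :: "('o,'m,'x) wcat_scheme \<Rightarrow> ('o,'m,'p) doct \<Rightarrow> ('o,'p) hops \<Rightarrow> bool" where
  "elementary C P H \<longleftrightarrow>
     (\<forall>A\<in>obj C.
        heq H A \<in> fib P (prd C A A) \<and>
        leq P A (htop H A) (re P (pair C (idt C A) (idt C A)) (heq H A)) \<and>
        (\<forall>X\<in>obj C. \<forall>a\<in>fib P (prd C X A).
           leq P (prd C (prd C X A) A)
             (hmeet H (prd C (prd C X A) A)
                (re P (pr1 C (prd C X A) A) a)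
                (re P (pair C (comp C (pr2 C X A) (pr1 C (prd C X A) A)) (pr2 C (prd C X A) A)) (heq H A)))
             (re P (pair C (comp C (pr1 C X A) (pr1 C (prd C X A) A)) (pr2 C (prd C X A) A)) a)) \<and>
        (\<forall>B\<in>obj C.
           leq P (prd C (prd C A B) (prd C A B))
             (heq H (prd C A B))
             (hmeet H (prd C (prd C A B) (prd C A B))
                (re P (cross C (pr1 C A B) (pr1 C A B)) (heq H A))
                (re P (cross C (pr2 C A B) (pr2 C A B)) (heq H B)))))"

definition weak_hyperdoctrine :: "('o,'m,'x) wcat_scheme \<Rightarrow> ('o,'m,'p) doct \<Rightarrow> ('o,'p) hops \<Rightarrow> bool" where
  "weak_hyperdoctrine C P H \<longleftrightarrow>
     weakly_cc C \<and> doctrine C P \<and> heyting_fibres C P H \<and> has_quantifiers C P H \<and> elementary C P H"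

definition is_wcomp :: "('o,'m,'x) wcat_scheme \<Rightarrow> ('o,'m,'p) doct \<Rightarrow> ('o,'p) hops \<Rightarrow> 'o \<Rightarrow> 'p \<Rightarrow> 'm \<Rightarrow> bool" where
  "is_wcomp C P H A a c \<longleftrightarrow>
     c \<in> arr C \<and> ccod C c = A \<and> leq P (cdom C c) (htop H (cdom C c)) (re P c a) \<and>
     (\<forall>f\<in>arr C. ccod C f = A \<and> leq P (cdom C f) (htop H (cdom C f)) (re P f a) \<longrightarrow> factors C f c)"

definition full_weak_comprehensions :: "('o,'m,'x) wcat_scheme \<Rightarrow> ('o,'m,'p) doct \<Rightarrow> ('o,'p) hops \<Rightarrow> bool" where
  "full_weak_comprehensions C P H \<longleftrightarrow>
     (\<forall>A\<in>obj C. \<forall>a\<in>fib P A. \<exists>c. is_wcomp C P H A a c) \<and>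
     (\<forall>A\<in>obj C. \<forall>a\<in>fib P A. \<forall>b\<in>fib P A. \<forall>c d.
        is_wcomp C P H A a c \<and> is_wcomp C P H A b d \<and> factors C c d \<longrightarrow> leq P A a b)"

definition strong_comprehensions :: "('o,'m,'x) wcat_scheme \<Rightarrow> ('o,'m,'p) doct \<Rightarrow> ('o,'p) hops \<Rightarrow> bool" where
  "strong_comprehensions C P H \<longleftrightarrow>
     (\<forall>A\<in>obj C. \<forall>a\<in>fib P A. \<exists>c. is_wcomp C P H A a c \<and> monic C c)"

definition comprehensive_diagonals :: "('o,'m,'x) wcat_scheme \<Rightarrow> ('o,'m,'p) doct \<Rightarrow> ('o,'p) hops \<Rightarrow> bool" where
  "comprehensive_diagonals C P H \<longleftrightarrow>
     (\<forall>A Y f g. f \<in> hom C A Y \<and> g \<in> hom C A Y \<and>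
        leq P A (htop H A) (re P (pair C f g) (heq H Y)) \<longrightarrow> f = g)"

text \<open>Class of \<open>f\<close> in the poset reflection of \<open>C/A\<close>.\<close>
definition cls :: "('o,'m,'x) wcat_scheme \<Rightarrow> 'o \<Rightarrow> 'm \<Rightarrow> 'm set" where
  "cls C A f = {g \<in> arr C. ccod C g = A \<and> factors C g f \<and> factors C f g}"

definition Psi :: "('o,'m,'x) wcat_scheme \<Rightarrow> ('o,'m,'m set) doct" where
  "Psi C = \<lparr> fib = (\<lambda>A. {cls C A f | f. f \<in> arr C \<and> ccod C f = A}),
             leq = (\<lambda>A u v. \<exists>f g. f \<in> arr C \<and> g \<in> arr C \<and> ccod C f = A \<and> ccod C g = A \<and>
                        u = cls C A f \<and> v = cls C A g \<and> factors C f g),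
             re = (\<lambda>f u. cls C (cdom C f) (SOME p. \<exists>g q. g \<in> u \<and> is_wpb C f g p q)) \<rparr>"

text \<open>Subobject of a mono \<open>m\<close>: its class of monos under mutual factorisation (= isomorphism in \<open>C/A\<close>).\<close>
definition msub :: "('o,'m,'x) wcat_scheme \<Rightarrow> 'o \<Rightarrow> 'm \<Rightarrow> 'm set" where
  "msub C A m = {n. monic C n \<and> ccod C n = A \<and> factors C n m \<and> factors C m n}"

definition Sub :: "('o,'m,'x) wcat_scheme \<Rightarrow> ('o,'m,'m set) doct" where
  "Sub C = \<lparr> fib = (\<lambda>A. {msub C A m | m. monic C m \<and> ccod C m = A}),
             leq = (\<lambda>A u v. \<exists>m n. monic C m \<and> monic C n \<and> ccod C m = A \<and> ccod C n = A \<and>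
                        u = msub C A m \<and> v = msub C A n \<and> factors C m n),
             re = (\<lambda>f u. msub C (cdom C f) (SOME p. \<exists>m q. m \<in> u \<and> is_pb C f m p q)) \<rparr>"

end

theory Submission
  imports Defs
begin

text \<open>
  A weak comprehension \<open>c\<close> of \<open>\<alpha>\<close> is characterised by: an arrow \<open>f\<close> factors through \<open>c\<close>
  iff \<open>\<alpha>\<close> holds along \<open>f\<close>, i.e. \<open>\<top> \<le> P\<^sub>f(\<alpha>)\<close>. In \<open>\<Psi>\<^sub>C\<close> and \<open>Sub\<^sub>C\<close> the order is
  factorisation of representing arrows and reindexing is by (weak) pullback, so both equalities
  reduce to statements about where formulas hold. By Beck--Chevalley and the adjunction,
  \<open>\<forall>\<alpha>\<close> holds along \<open>f\<close> iff \<open>\<alpha>\<close> holds along \<open>f \<times> id\<close>, and an arrow into \<open>X\<close> whose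
  pullback along \<open>pr\<^sub>1\<close> factors through \<open>{\<alpha>}\<close> therefore factors through \<open>{\<forall>\<alpha>}\<close>.
  For implication, \<open>\<gamma> \<Rightarrow> \<beta>\<close> holds along \<open>f\<close> as soon as \<open>P\<^sub>f \<gamma> \<le> P\<^sub>f \<beta>\<close>; fullness of the
  comprehensions yields this inequality from a factorisation between the comprehensions of
  \<open>P\<^sub>f \<gamma>\<close> and \<open>P\<^sub>f \<beta>\<close>, which the hypothesis \<open>f \<le> {\<gamma>} \<Rightarrow> {\<beta>}\<close> provides.
\<close>

lemma category_arr_objs: "category C \<Longrightarrow> f \<in> arr C \<Longrightarrow> cdom C f \<in> obj C \<and> ccod C f \<in> obj C"
  unfolding category_def by blast

lemma category_comp: "category C \<Longrightarrow> f \<in> arr C \<Longrightarrow> g \<in> arr C \<Longrightarrow> ccod C f = cdom C g \<Longrightarrow>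
    comp C g f \<in> arr C \<and> cdom C (comp C g f) = cdom C f \<and> ccod C (comp C g f) = ccod C g"
  unfolding category_def hom_def by blast

lemma category_idt: "category C \<Longrightarrow> A \<in> obj C \<Longrightarrow> idt C A \<in> arr C \<and> cdom C (idt C A) = A \<and> ccod C (idt C A) = A"
  unfolding category_def hom_def by blast

lemma category_comp_idt: "category C \<Longrightarrow> f \<in> arr C \<Longrightarrow> comp C f (idt C (cdom C f)) = f"
  unfolding category_def by blast

lemma category_comp_assoc: "category C \<Longrightarrow> f \<in> arr C \<Longrightarrow> g \<in> arr C \<Longrightarrow> h \<in> arr C \<Longrightarrow>
    ccod C f = cdom C g \<Longrightarrow> ccod C g = cdom C h \<Longrightarrow> comp C h (comp C g f) = comp C (comp C h g) f"
  unfolding category_def by blast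

lemma factorsE:
  assumes "factors C f g"
  obtains k where "k \<in> arr C" "cdom C k = cdom C f" "ccod C k = cdom C g" "comp C g k = f"
  using assms unfolding factors_def by blast

lemma factors_refl: "category C \<Longrightarrow> f \<in> arr C \<Longrightarrow> factors C f f"
  unfolding factors_def using category_idt category_comp_idt category_arr_objs by metis

lemma factors_comp: "category C \<Longrightarrow> f \<in> arr C \<Longrightarrow> k \<in> arr C \<Longrightarrow> ccod C k = cdom C f \<Longrightarrow>
    factors C (comp C f k) f"
  unfolding factors_def using category_comp by metis

lemma factors_trans:
  assumes cat: "category C" and "factors C f g" "factors C g h" and h: "h \<in> arr C"
  shows "factors C f h"
proof -
  obtain k where k: "k \<in> arr C" "cdom C k = cdom C f" "ccod C k = cdom C g" "comp C g k = f"
    using \<open>factors C f g\<close> by (rule factorsE)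
  obtain l where l: "l \<in> arr C" "cdom C l = cdom C g" "ccod C l = cdom C h" "comp C h l = g"
    using \<open>factors C g h\<close> by (rule factorsE)
  have "comp C h (comp C l k) = f"
    using category_comp_assoc[OF cat k(1) l(1) h] k l by simp
  then show ?thesis
    unfolding factors_def using category_comp[OF cat k(1) l(1)] k l by metis
qed

lemma pair_props:
  assumes "has_products C" "A \<in> obj C" "B \<in> obj C" "f \<in> hom C Z A" "g \<in> hom C Z B"
  shows "pair C f g \<in> hom C Z (prd C A B) \<and>
    comp C (pr1 C A B) (pair C f g) = f \<and> comp C (pr2 C A B) (pair C f g) = g"
proof -
  have "cdom C f = Z" "ccod C f = A" "ccod C g = B" using assms(4,5) unfolding hom_def by auto
  moreover have "\<exists>!h. h \<in> hom C Z (prd C A B) \<and> comp C (pr1 C A B) h = f \<and> comp C (pr2 C A B) h = g"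
    using assms unfolding has_products_def by blast
  ultimately show ?thesis unfolding pair_def using theI' by simp
qed

lemma wpb_mediator:
  assumes "is_wpb C f g p q" "p' \<in> arr C" "q' \<in> arr C" "cdom C p' = cdom C q'"
    and "ccod C p' = cdom C f" "ccod C q' = cdom C g" "comp C f p' = comp C g q'"
  shows "factors C p' p"
  using assms unfolding is_wpb_def factors_def by metis

lemma wpb_factors_iff:
  assumes cat: "category C" and wpb: "is_wpb C h g p q"
    and "factors C g f" "factors C f g" and f: "f \<in> arr C"
    and k: "k \<in> arr C" "ccod C k = cdom C h"
  shows "factors C k p \<longleftrightarrow> factors C (comp C h k) f"
proof -
  have w: "h \<in> arr C" "g \<in> arr C" "p \<in> arr C" "q \<in> arr C" "cdom C p = cdom C q"
    "ccod C p = cdom C h" "ccod C q = cdom C g" "comp C h p = comp C g q"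
    using wpb unfolding is_wpb_def by auto
  show ?thesis
  proof
    assume "factors C k p"
    then obtain l where l: "l \<in> arr C" "cdom C l = cdom C k" "ccod C l = cdom C p" "comp C p l = k"
      by (rule factorsE)
    have "comp C h k = comp C g (comp C q l)"
      using l w category_comp_assoc[OF cat l(1) w(3) w(1)] category_comp_assoc[OF cat l(1) w(4) w(2)]
      by simp
    moreover have "factors C (comp C g (comp C q l)) g"
      using factors_comp[OF cat w(2)] category_comp[OF cat l(1) w(4)] l w by simp
    ultimately show "factors C (comp C h k) f"
      using factors_trans[OF cat _ \<open>factors C g f\<close> f] by simp
  next
    assume "factors C (comp C h k) f"
    then obtain m where m: "m \<in> arr C" "cdom C m = cdom C k" "ccod C m = cdom C f" "comp C f m = comp C h k"
      using category_comp[OF cat k(1) w(1) k(2)] by (auto elim: factorsE)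
    obtain n where n: "n \<in> arr C" "cdom C n = cdom C f" "ccod C n = cdom C g" "comp C g n = f"
      using \<open>factors C f g\<close> by (rule factorsE)
    have "comp C h k = comp C g (comp C n m)"
      using m n category_comp_assoc[OF cat m(1) n(1) w(2)] by simp
    then show "factors C k p"
      using wpb_mediator[OF wpb k(1), of "comp C n m"] category_comp[OF cat m(1) n(1)] k m n by simp
  qed
qed

lemma cross_idt_props:
  assumes cat: "category C" and pr: "has_products C" and f: "f \<in> arr C" and Y: "Y \<in> obj C"
  shows "cross C f (idt C Y) \<in> hom C (prd C (cdom C f) Y) (prd C (ccod C f) Y)"
    and "comp C (pr1 C (ccod C f) Y) (cross C f (idt C Y)) = comp C f (pr1 C (cdom C f) Y)"
proof -
  let ?Z = "cdom C f" and ?X = "ccod C f"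
  have Z: "?Z \<in> obj C" and X: "?X \<in> obj C" using category_arr_objs[OF cat f] by auto
  have i: "idt C Y \<in> arr C" "cdom C (idt C Y) = Y" "ccod C (idt C Y) = Y"
    using category_idt[OF cat Y] by auto
  have p: "pr1 C ?Z Y \<in> hom C (prd C ?Z Y) ?Z" "pr2 C ?Z Y \<in> hom C (prd C ?Z Y) Y"
    using pr Z Y unfolding has_products_def by blast+
  have "comp C f (pr1 C ?Z Y) \<in> hom C (prd C ?Z Y) ?X"
    using category_comp[OF cat _ f, of "pr1 C ?Z Y"] p unfolding hom_def by auto
  moreover have "comp C (idt C Y) (pr2 C ?Z Y) \<in> hom C (prd C ?Z Y) Y"
    using category_comp[OF cat _ i(1), of "pr2 C ?Z Y"] p i unfolding hom_def by auto
  ultimately show "cross C f (idt C Y) \<in> hom C (prd C ?Z Y) (prd C ?X Y)"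
    and "comp C (pr1 C ?X Y) (cross C f (idt C Y)) = comp C f (pr1 C ?Z Y)"
    unfolding cross_def i(2) using pair_props[OF pr X Y] by blast+
qed

section \<open>Validity of a formula along an arrow\<close>

definition valid_along :: "('o,'m,'x) wcat_scheme \<Rightarrow> ('o,'m,'p) doct \<Rightarrow> ('o,'p) hops \<Rightarrow> 'm \<Rightarrow> 'p \<Rightarrow> bool" where
  "valid_along C P H f a \<longleftrightarrow> leq P (cdom C f) (htop H (cdom C f)) (re P f a)"

lemma is_wcomp_iff_valid_along:
  "is_wcomp C P H A a c \<longleftrightarrow> c \<in> arr C \<and> ccod C c = A \<and> valid_along C P H c a \<and>
     (\<forall>f\<in>arr C. ccod C f = A \<and> valid_along C P H f a \<longrightarrow> factors C f c)"
  unfolding is_wcomp_def valid_along_def ..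

locale hyperdoctrine =
  fixes C :: "('o,'m) wcat" and P :: "('o,'m,'p) doct" and H :: "('o,'p) hops"
  assumes weak_hyperdoctrine: "weak_hyperdoctrine C P H"
begin

lemma category: "category C" and has_products: "has_products C"
  and doctrine: "doctrine C P" and heyting: "heyting_fibres C P H" and quantifiers: "has_quantifiers C P H"
  using weak_hyperdoctrine unfolding weak_hyperdoctrine_def weakly_cc_def by blast+

lemma leq_refl: "A \<in> obj C \<Longrightarrow> a \<in> fib P A \<Longrightarrow> leq P A a a"
  using doctrine unfolding doctrine_def by (elim conjE) blast

lemma leq_antisym: "A \<in> obj C \<Longrightarrow> a \<in> fib P A \<Longrightarrow> b \<in> fib P A \<Longrightarrow> leq P A a b \<Longrightarrow> leq P A b a \<Longrightarrow> a = b"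
  using doctrine unfolding doctrine_def by blast

lemma leq_trans: "A \<in> obj C \<Longrightarrow> a \<in> fib P A \<Longrightarrow> b \<in> fib P A \<Longrightarrow> c \<in> fib P A \<Longrightarrow>
    leq P A a b \<Longrightarrow> leq P A b c \<Longrightarrow> leq P A a c"
  using doctrine unfolding doctrine_def by blast

lemma re_closed: "f \<in> arr C \<Longrightarrow> a \<in> fib P (ccod C f) \<Longrightarrow> re P f a \<in> fib P (cdom C f)"
  using doctrine unfolding doctrine_def by blast

lemma re_mono: "f \<in> arr C \<Longrightarrow> a \<in> fib P (ccod C f) \<Longrightarrow> b \<in> fib P (ccod C f) \<Longrightarrow>
    leq P (ccod C f) a b \<Longrightarrow> leq P (cdom C f) (re P f a) (re P f b)"
  using doctrine unfolding doctrine_def by blast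

lemma re_comp: "f \<in> arr C \<Longrightarrow> g \<in> arr C \<Longrightarrow> ccod C f = cdom C g \<Longrightarrow> a \<in> fib P (ccod C g) \<Longrightarrow>
    re P (comp C g f) a = re P f (re P g a)"
  using doctrine unfolding doctrine_def by blast

lemma top_closed: "A \<in> obj C \<Longrightarrow> htop H A \<in> fib P A"
  using heyting unfolding heyting_fibres_def by blast

lemma meet_closed: "A \<in> obj C \<Longrightarrow> a \<in> fib P A \<Longrightarrow> b \<in> fib P A \<Longrightarrow> hmeet H A a b \<in> fib P A"
  using heyting unfolding heyting_fibres_def by blast

lemma imp_closed: "A \<in> obj C \<Longrightarrow> a \<in> fib P A \<Longrightarrow> b \<in> fib P A \<Longrightarrow> himp H A a b \<in> fib P A"
  using heyting unfolding heyting_fibres_def by blast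

lemma le_meet_iff: "A \<in> obj C \<Longrightarrow> a \<in> fib P A \<Longrightarrow> b \<in> fib P A \<Longrightarrow> c \<in> fib P A \<Longrightarrow>
    leq P A c (hmeet H A a b) \<longleftrightarrow> leq P A c a \<and> leq P A c b"
  using heyting unfolding heyting_fibres_def by blast

lemma le_imp_iff: "A \<in> obj C \<Longrightarrow> a \<in> fib P A \<Longrightarrow> b \<in> fib P A \<Longrightarrow> c \<in> fib P A \<Longrightarrow>
    leq P A c (himp H A a b) \<longleftrightarrow> leq P A (hmeet H A c a) b"
  using heyting unfolding heyting_fibres_def by blast

lemma re_top: "f \<in> arr C \<Longrightarrow> re P f (htop H (ccod C f)) = htop H (cdom C f)"
  using heyting unfolding heyting_fibres_def by blast

lemma re_imp: "f \<in> arr C \<Longrightarrow> a \<in> fib P (ccod C f) \<Longrightarrow> b \<in> fib P (ccod C f) \<Longrightarrow>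
    re P f (himp H (ccod C f) a b) = himp H (cdom C f) (re P f a) (re P f b)"
  using heyting unfolding heyting_fibres_def by blast

lemma all_closed: "X \<in> obj C \<Longrightarrow> Y \<in> obj C \<Longrightarrow> a \<in> fib P (prd C X Y) \<Longrightarrow> hall H X Y a \<in> fib P X"
  using quantifiers unfolding has_quantifiers_def by blast

lemma le_all_iff: "X \<in> obj C \<Longrightarrow> Y \<in> obj C \<Longrightarrow> a \<in> fib P (prd C X Y) \<Longrightarrow> b \<in> fib P X \<Longrightarrow>
    leq P X b (hall H X Y a) \<longleftrightarrow> leq P (prd C X Y) (re P (pr1 C X Y) b) a"
  using quantifiers unfolding has_quantifiers_def by blast

lemma re_all: "X \<in> obj C \<Longrightarrow> Y \<in> obj C \<Longrightarrow> a \<in> fib P (prd C X Y) \<Longrightarrow> f \<in> arr C \<Longrightarrow> ccod C f = X \<Longrightarrow>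
    re P f (hall H X Y a) = hall H (cdom C f) Y (re P (cross C f (idt C Y)) a)"
  using quantifiers unfolding has_quantifiers_def by blast

lemma pr1_props: "X \<in> obj C \<Longrightarrow> Y \<in> obj C \<Longrightarrow>
    prd C X Y \<in> obj C \<and> pr1 C X Y \<in> arr C \<and> cdom C (pr1 C X Y) = prd C X Y \<and> ccod C (pr1 C X Y) = X"
  using has_products unfolding has_products_def hom_def by blast

lemma re_pr1_all_le: "X \<in> obj C \<Longrightarrow> Y \<in> obj C \<Longrightarrow> a \<in> fib P (prd C X Y) \<Longrightarrow>
    leq P (prd C X Y) (re P (pr1 C X Y) (hall H X Y a)) a"
  using le_all_iff leq_refl all_closed by blast

lemma le_top_imp_mp:
  assumes A: "A \<in> obj C" and a: "a \<in> fib P A" and b: "b \<in> fib P A"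
    and "leq P A (htop H A) (himp H A a b)" "leq P A (htop H A) a"
  shows "leq P A (htop H A) b"
proof -
  have t: "htop H A \<in> fib P A" using top_closed[OF A] .
  have "leq P A (htop H A) (hmeet H A (htop H A) a)"
    using le_meet_iff[OF A t a t] leq_refl[OF A t] assms(5) by blast
  moreover have "leq P A (hmeet H A (htop H A) a) b"
    using le_imp_iff[OF A a b t] assms(4) by blast
  ultimately show ?thesis using leq_trans[OF A t meet_closed[OF A t a] b] by blast
qed

lemma le_top_imp_of_le:
  assumes A: "A \<in> obj C" and a: "a \<in> fib P A" and b: "b \<in> fib P A" and "leq P A a b"
  shows "leq P A (htop H A) (himp H A a b)"
proof -
  have t: "htop H A \<in> fib P A" using top_closed[OF A] .
  have "leq P A (hmeet H A (htop H A) a) a"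
    using le_meet_iff[OF A t a meet_closed[OF A t a]] leq_refl[OF A meet_closed[OF A t a]] by blast
  then have "leq P A (hmeet H A (htop H A) a) b"
    using leq_trans[OF A meet_closed[OF A t a] a b] assms(4) by blast
  then show ?thesis using le_imp_iff[OF A a b t] by blast
qed

lemma valid_along_comp_iff:
  assumes "f \<in> arr C" "g \<in> arr C" "ccod C f = cdom C g" "a \<in> fib P (ccod C g)"
  shows "valid_along C P H (comp C g f) a \<longleftrightarrow> valid_along C P H f (re P g a)"
  unfolding valid_along_def using re_comp[OF assms] category_comp[OF category assms(1-3)] by simp

lemma valid_along_comp:
  assumes "valid_along C P H g a" "a \<in> fib P (ccod C g)"
    and f: "f \<in> arr C" and g: "g \<in> arr C" "ccod C f = cdom C g"
  shows "valid_along C P H (comp C g f) a"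
proof -
  have G: "cdom C g \<in> obj C" using category_arr_objs[OF category g(1)] by simp
  have "leq P (cdom C f) (re P f (htop H (cdom C g))) (re P f (re P g a))"
    using assms re_mono[OF f] top_closed[OF G] re_closed[OF g(1)]
    unfolding valid_along_def by simp
  then show ?thesis using valid_along_comp_iff[OF f g assms(2)] re_top[OF f] g(2)
    unfolding valid_along_def by simp
qed

lemma valid_along_mono:
  assumes "valid_along C P H f a" "leq P (ccod C f) a b" and f: "f \<in> arr C"
    and "a \<in> fib P (ccod C f)" "b \<in> fib P (ccod C f)"
  shows "valid_along C P H f b"
proof -
  have Z: "cdom C f \<in> obj C" using category_arr_objs[OF category f] by simp
  show ?thesis
    using assms leq_trans[OF Z top_closed[OF Z]] re_mono[OF f] re_closed[OF f]
    unfolding valid_along_def by blast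
qed

lemma valid_along_imp_mp:
  assumes "valid_along C P H f (himp H (ccod C f) a b)" "valid_along C P H f a"
    and f: "f \<in> arr C" and a: "a \<in> fib P (ccod C f)" and b: "b \<in> fib P (ccod C f)"
  shows "valid_along C P H f b"
proof -
  have Z: "cdom C f \<in> obj C" using category_arr_objs[OF category f] by simp
  show ?thesis
    using le_top_imp_mp[OF Z re_closed[OF f a] re_closed[OF f b]] assms(1,2) re_imp[OF f a b]
    unfolding valid_along_def by simp
qed

lemma valid_along_imp_of_le:
  assumes "leq P (cdom C f) (re P f a) (re P f b)"
    and f: "f \<in> arr C" and a: "a \<in> fib P (ccod C f)" and b: "b \<in> fib P (ccod C f)"
  shows "valid_along C P H f (himp H (ccod C f) a b)"
proof -
  have Z: "cdom C f \<in> obj C" using category_arr_objs[OF category f] by simp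
  show ?thesis
    using le_top_imp_of_le[OF Z re_closed[OF f a] re_closed[OF f b] assms(1)] re_imp[OF f a b]
    unfolding valid_along_def by simp
qed

lemma valid_along_all_iff:
  assumes X: "X \<in> obj C" and Y: "Y \<in> obj C" and a: "a \<in> fib P (prd C X Y)"
    and f: "f \<in> arr C" "ccod C f = X"
  shows "valid_along C P H f (hall H X Y a) \<longleftrightarrow> valid_along C P H (cross C f (idt C Y)) a"
proof -
  let ?Z = "cdom C f" and ?fY = "cross C f (idt C Y)"
  have Z: "?Z \<in> obj C" using category_arr_objs[OF category f(1)] by simp
  have fY: "?fY \<in> arr C" "cdom C ?fY = prd C ?Z Y" "ccod C ?fY = prd C X Y"
    using cross_idt_props(1)[OF category has_products f(1) Y] f(2) unfolding hom_def by auto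
  have fYa: "re P ?fY a \<in> fib P (prd C ?Z Y)" using re_closed[OF fY(1)] fY a by simp
  have "re P (pr1 C ?Z Y) (htop H ?Z) = htop H (prd C ?Z Y)"
    using re_top pr1_props[OF Z Y] by metis
  then show ?thesis
    unfolding valid_along_def re_all[OF X Y a f]
    using le_all_iff[OF Z Y fYa top_closed[OF Z]] fY by simp
qed

lemma valid_along_iff_factors:
  assumes "is_wcomp C P H A a c" "a \<in> fib P A" and f: "f \<in> arr C" "ccod C f = A"
  shows "valid_along C P H f a \<longleftrightarrow> factors C f c"
proof
  assume "factors C f c"
  then obtain k where "k \<in> arr C" "cdom C k = cdom C f" "ccod C k = cdom C c" "comp C c k = f"
    by (rule factorsE)
  then show "valid_along C P H f a"
    using valid_along_comp[of c a k] assms(1,2) unfolding is_wcomp_iff_valid_along by metis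
qed (use assms in \<open>auto simp: is_wcomp_iff_valid_along\<close>)

end

text \<open>
  The fibre over \<open>A\<close> consists of the classes \<open>cl A f\<close> of representing arrows \<open>f\<close> into \<open>A\<close>:
  all arrows with \<open>cls\<close> for \<open>\<Psi>\<^sub>C\<close>, monos with \<open>msub\<close> for \<open>Sub\<^sub>C\<close>.
\<close>
locale class_doctrine = hyperdoctrine C D HD
  for C :: "('o,'m) wcat" and D :: "('o,'m,'q) doct" and HD :: "('o,'q) hops" +
  fixes Rep :: "'m \<Rightarrow> bool" and cl :: "'o \<Rightarrow> 'm \<Rightarrow> 'q"
  assumes rep_arr: "Rep f \<Longrightarrow> f \<in> arr C"
    and rep_comp: "Rep f \<Longrightarrow> Rep g \<Longrightarrow> ccod C g = cdom C f \<Longrightarrow> Rep (comp C f g)"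
    and cl_closed: "Rep f \<Longrightarrow> cl (ccod C f) f \<in> fib D (ccod C f)"
    and fib_cl: "A \<in> obj C \<Longrightarrow> u \<in> fib D A \<Longrightarrow> \<exists>f. Rep f \<and> ccod C f = A \<and> u = cl A f"
    and leq_cl_iff: "Rep f \<Longrightarrow> Rep g \<Longrightarrow> ccod C f = A \<Longrightarrow> ccod C g = A \<Longrightarrow>
       leq D A (cl A f) (cl A g) \<longleftrightarrow> factors C f g"
    and re_cl: "h \<in> arr C \<Longrightarrow> Rep f \<Longrightarrow> ccod C f = ccod C h \<Longrightarrow>
       \<exists>p. Rep p \<and> ccod C p = cdom C h \<and> re D h (cl (ccod C h) f) = cl (cdom C h) p \<and>
         (\<forall>k\<in>arr C. ccod C k = cdom C h \<longrightarrow> (factors C k p \<longleftrightarrow> factors C (comp C h k) f))"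

locale comprehension_classes = D: class_doctrine C D HD Rep cl + P: hyperdoctrine C P H
  for C :: "('o,'m) wcat" and D :: "('o,'m,'q) doct" and HD :: "('o,'q) hops"
    and Rep :: "'m \<Rightarrow> bool" and cl :: "'o \<Rightarrow> 'm \<Rightarrow> 'q"
    and P :: "('o,'m,'p) doct" and H :: "('o,'p) hops" +
  assumes full: "full_weak_comprehensions C P H"
    and rep_wcomp_exists: "A \<in> obj C \<Longrightarrow> a \<in> fib P A \<Longrightarrow> \<exists>c. is_wcomp C P H A a c \<and> Rep c"
begin

lemma leq_cl_wcomp_iff:
  assumes "is_wcomp C P H A a c" "Rep c" "a \<in> fib P A" "Rep f" "ccod C f = A"
  shows "leq D A (cl A f) (cl A c) \<longleftrightarrow> valid_along C P H f a"
  using assms D.leq_cl_iff P.valid_along_iff_factors D.rep_arr is_wcomp_iff_valid_along by metis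

lemma cl_closed_at: "Rep f \<Longrightarrow> ccod C f = A \<Longrightarrow> cl A f \<in> fib D A"
  using D.cl_closed by blast

lemma wcomp_le_all:
  assumes X: "X \<in> obj C" and Y: "Y \<in> obj C" and a: "a \<in> fib P (prd C X Y)"
    and c: "is_wcomp C P H X (hall H X Y a) c" "Rep c"
    and d: "is_wcomp C P H (prd C X Y) a d" "Rep d"
  shows "leq D X (cl X c) (hall HD X Y (cl (prd C X Y) d))"
proof -
  let ?pr1 = "pr1 C X Y"
  have pr1: "?pr1 \<in> arr C" "cdom C ?pr1 = prd C X Y" "ccod C ?pr1 = X" using P.pr1_props[OF X Y] by auto
  have cX: "ccod C c = X" and dXY: "ccod C d = prd C X Y" using c(1) d(1) by (auto simp: is_wcomp_def)
  obtain p where p: "Rep p" "ccod C p = prd C X Y" "re D ?pr1 (cl X c) = cl (prd C X Y) p"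
      and p_factors: "\<forall>k\<in>arr C. ccod C k = prd C X Y \<longrightarrow> (factors C k p \<longleftrightarrow> factors C (comp C ?pr1 k) c)"
    using D.re_cl[OF pr1(1) c(2)] cX pr1 by auto
  have pa: "p \<in> arr C" using D.rep_arr[OF p(1)] .
  have all_a: "hall H X Y a \<in> fib P X" using P.all_closed[OF X Y a] .
  have "factors C (comp C ?pr1 p) c" using p_factors factors_refl[OF P.category pa] pa p(2) by blast
  then have "valid_along C P H (comp C ?pr1 p) (hall H X Y a)"
    using P.valid_along_iff_factors[OF c(1) all_a] category_comp[OF P.category pa pr1(1)] pr1 p(2) by simp
  then have "valid_along C P H p (re P ?pr1 (hall H X Y a))"
    using P.valid_along_comp_iff[OF pa pr1(1)] pr1 p(2) all_a by simp
  then have "valid_along C P H p a"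
    using P.valid_along_mono[OF _ _ pa] P.re_pr1_all_le[OF X Y a] P.re_closed[OF pr1(1)] pr1 p(2) all_a a
    by simp
  then have "leq D (prd C X Y) (cl (prd C X Y) p) (cl (prd C X Y) d)"
    using leq_cl_wcomp_iff[OF d(1,2) a p(1,2)] by simp
  then show ?thesis
    using D.le_all_iff[OF X Y cl_closed_at[OF d(2) dXY] cl_closed_at[OF c(2) cX]] p(3) by simp
qed

lemma all_le_wcomp:
  assumes X: "X \<in> obj C" and Y: "Y \<in> obj C" and a: "a \<in> fib P (prd C X Y)"
    and c: "is_wcomp C P H X (hall H X Y a) c" "Rep c"
    and d: "is_wcomp C P H (prd C X Y) a d" "Rep d"
  shows "leq D X (hall HD X Y (cl (prd C X Y) d)) (cl X c)"
proof -
  let ?pr1 = "pr1 C X Y"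
  have pr1: "?pr1 \<in> arr C" "cdom C ?pr1 = prd C X Y" "ccod C ?pr1 = X" using P.pr1_props[OF X Y] by auto
  have dXY: "ccod C d = prd C X Y" and da: "d \<in> arr C" using d(1) by (auto simp: is_wcomp_def)
  have cld: "cl (prd C X Y) d \<in> fib D (prd C X Y)" using cl_closed_at[OF d(2) dXY] .
  obtain f where f: "Rep f" "ccod C f = X" "hall HD X Y (cl (prd C X Y) d) = cl X f"
    using D.fib_cl[OF X D.all_closed[OF X Y cld]] by auto
  have fa: "f \<in> arr C" using D.rep_arr[OF f(1)] .
  obtain p where p: "Rep p" "ccod C p = prd C X Y" "re D ?pr1 (cl X f) = cl (prd C X Y) p"
      and p_factors: "\<forall>k\<in>arr C. ccod C k = prd C X Y \<longrightarrow> (factors C k p \<longleftrightarrow> factors C (comp C ?pr1 k) f)"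
    using D.re_cl[OF pr1(1) f(1)] f(2) pr1 by auto
  have "leq D (prd C X Y) (cl (prd C X Y) p) (cl (prd C X Y) d)"
    using D.re_pr1_all_le[OF X Y cld] f(3) p(3) by simp
  then have pd: "factors C p d" using D.leq_cl_iff[OF p(1) d(2) p(2) dXY] by simp
  let ?Z = "cdom C f" and ?fY = "cross C f (idt C Y)"
  have Z: "?Z \<in> obj C" using category_arr_objs[OF P.category fa] by simp
  have fY: "?fY \<in> arr C" "cdom C ?fY = prd C ?Z Y" "ccod C ?fY = prd C X Y"
    using cross_idt_props(1)[OF P.category P.has_products fa Y] f(2) unfolding hom_def by auto
  have "factors C (comp C f (pr1 C ?Z Y)) f"
    using factors_comp[OF P.category fa] P.pr1_props[OF Z Y] by simp
  then have "factors C ?fY p"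
    using p_factors fY cross_idt_props(2)[OF P.category P.has_products fa Y] f(2) by simp
  then have "valid_along C P H ?fY a"
    using P.valid_along_iff_factors[OF d(1) a fY(1,3)] factors_trans[OF P.category _ pd da] by blast
  then have "valid_along C P H f (hall H X Y a)"
    using P.valid_along_all_iff[OF X Y a fa f(2)] by simp
  then show ?thesis
    using leq_cl_wcomp_iff[OF c P.all_closed[OF X Y a] f(1,2)] f(3) by simp
qed

lemma wcomp_le_imp:
  assumes A: "A \<in> obj C" and g: "g \<in> fib P A" and b: "b \<in> fib P A"
    and c: "is_wcomp C P H A (himp H A g b) c" "Rep c"
    and d: "is_wcomp C P H A g d" "Rep d"
    and e: "is_wcomp C P H A b e" "Rep e"
  shows "leq D A (cl A c) (himp HD A (cl A d) (cl A e))"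
proof -
  have cls: "cl A c \<in> fib D A" "cl A d \<in> fib D A" "cl A e \<in> fib D A"
    using c d e cl_closed_at by (auto simp: is_wcomp_def)
  define M where "M = hmeet HD A (cl A c) (cl A d)"
  have M: "M \<in> fib D A" unfolding M_def using D.meet_closed[OF A cls(1,2)] .
  obtain m where m: "Rep m" "ccod C m = A" "M = cl A m" using D.fib_cl[OF A M] by blast
  have ma: "m \<in> arr C" using D.rep_arr[OF m(1)] .
  have "leq D A M (cl A c)" "leq D A M (cl A d)"
    using D.le_meet_iff[OF A cls(1,2) M] D.leq_refl[OF A M] unfolding M_def by auto
  then have "valid_along C P H m (himp H A g b)" "valid_along C P H m g"
    using leq_cl_wcomp_iff[OF c P.imp_closed[OF A g b] m(1,2)] leq_cl_wcomp_iff[OF d g m(1,2)] m(3)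
    by auto
  then have "valid_along C P H m b" using P.valid_along_imp_mp[OF _ _ ma] m(2) g b by simp
  then have "leq D A M (cl A e)" using leq_cl_wcomp_iff[OF e b m(1,2)] m(3) by simp
  then show ?thesis using D.le_imp_iff[OF A cls(2,3,1)] unfolding M_def by simp
qed

lemma imp_le_wcomp:
  assumes A: "A \<in> obj C" and g: "g \<in> fib P A" and b: "b \<in> fib P A"
    and c: "is_wcomp C P H A (himp H A g b) c" "Rep c"
    and d: "is_wcomp C P H A g d" "Rep d"
    and e: "is_wcomp C P H A b e" "Rep e"
  shows "leq D A (himp HD A (cl A d) (cl A e)) (cl A c)"
proof -
  have cls: "cl A d \<in> fib D A" "cl A e \<in> fib D A"
    using d e cl_closed_at by (auto simp: is_wcomp_def)
  define I where "I = himp HD A (cl A d) (cl A e)"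
  have I: "I \<in> fib D A" unfolding I_def using D.imp_closed[OF A cls] .
  obtain f where f: "Rep f" "ccod C f = A" "I = cl A f" using D.fib_cl[OF A I] by blast
  have fa: "f \<in> arr C" using D.rep_arr[OF f(1)] .
  let ?Z = "cdom C f"
  have Z: "?Z \<in> obj C" using category_arr_objs[OF P.category fa] by simp
  have fg: "re P f g \<in> fib P ?Z" and fb: "re P f b \<in> fib P ?Z" using P.re_closed[OF fa] f(2) g b by auto
  obtain k where k: "is_wcomp C P H ?Z (re P f g) k" "Rep k" using rep_wcomp_exists[OF Z fg] by blast
  obtain k' where k': "is_wcomp C P H ?Z (re P f b) k'"
    using full Z fb unfolding full_weak_comprehensions_def by blast
  have ka: "k \<in> arr C" "ccod C k = ?Z" using k(1) by (auto simp: is_wcomp_def)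
  let ?fk = "comp C f k"
  have fk: "Rep ?fk" "ccod C ?fk = A" using D.rep_comp[OF f(1) k(2)] category_comp[OF P.category ka(1) fa] ka f(2)
    by auto
  have "valid_along C P H ?fk g"
    using P.valid_along_comp_iff[OF ka(1) fa] k(1) ka(2) f(2) g by (simp add: is_wcomp_iff_valid_along)
  then have "leq D A (cl A ?fk) (cl A d)" using leq_cl_wcomp_iff[OF d g fk] by simp
  moreover have "leq D A (cl A ?fk) I"
    using D.leq_cl_iff[OF fk(1) f(1) fk(2) f(2)] factors_comp[OF P.category fa ka(1)] ka(2) f(3) by simp
  moreover have "leq D A (hmeet HD A I (cl A d)) (cl A e)"
    using D.le_imp_iff[OF A cls I] D.leq_refl[OF A I] unfolding I_def by simp
  ultimately have "leq D A (cl A ?fk) (cl A e)"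
    using D.le_meet_iff[OF A I cls(1) cl_closed_at[OF fk]] D.leq_trans[OF A cl_closed_at[OF fk]]
      D.meet_closed[OF A I cls(1)] cls(2) by blast
  then have "valid_along C P H k (re P f b)"
    using leq_cl_wcomp_iff[OF e b fk] P.valid_along_comp_iff[OF ka(1) fa] ka(2) f(2) b by simp
  then have "factors C k k'" using P.valid_along_iff_factors[OF k' fb ka] by simp
  then have "leq P ?Z (re P f g) (re P f b)"
    using full Z fg fb k(1) k' unfolding full_weak_comprehensions_def by blast
  then have "valid_along C P H f (himp H A g b)" using P.valid_along_imp_of_le[OF _ fa] f(2) g b by simp
  then show ?thesis using leq_cl_wcomp_iff[OF c P.imp_closed[OF A g b] f(1,2)] f(3) unfolding I_def by simp
qed

lemma wcomp_all_eq:
  assumes "X \<in> obj C" "Y \<in> obj C" "a \<in> fib P (prd C X Y)"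
    and "is_wcomp C P H X (hall H X Y a) c" "Rep c" "is_wcomp C P H (prd C X Y) a d" "Rep d"
  shows "cl X c = hall HD X Y (cl (prd C X Y) d)"
  using D.leq_antisym wcomp_le_all[OF assms] all_le_wcomp[OF assms] cl_closed_at D.all_closed assms
  by (metis is_wcomp_def)

lemma wcomp_imp_eq:
  assumes "A \<in> obj C" "g \<in> fib P A" "b \<in> fib P A"
    and "is_wcomp C P H A (himp H A g b) c" "Rep c" "is_wcomp C P H A g d" "Rep d"
    and "is_wcomp C P H A b e" "Rep e"
  shows "cl A c = himp HD A (cl A d) (cl A e)"
  using D.leq_antisym wcomp_le_imp[OF assms] imp_le_wcomp[OF assms] cl_closed_at D.imp_closed assms
  by (metis is_wcomp_def)

end

lemma cls_self: "category C \<Longrightarrow> f \<in> arr C \<Longrightarrow> f \<in> cls C (ccod C f) f"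
  unfolding cls_def using factors_refl[of C f] by simp

lemma leq_Psi_cls_iff:
  assumes cat: "category C" and f: "f \<in> arr C" "ccod C f = A" and g: "g \<in> arr C" "ccod C g = A"
  shows "leq (Psi C) A (cls C A f) (cls C A g) \<longleftrightarrow> factors C f g"
proof
  assume "leq (Psi C) A (cls C A f) (cls C A g)"
  then obtain f' g' where g': "g' \<in> arr C" "ccod C g' = A"
      and eq: "cls C A f = cls C A f'" "cls C A g = cls C A g'" and "factors C f' g'"
    unfolding Psi_def by auto
  have "f \<in> cls C A f'" "g' \<in> cls C A g"
    using cls_self[OF cat f(1)] cls_self[OF cat g'(1)] f(2) g'(2) eq by simp_all
  then have "factors C f f'" "factors C g' g" unfolding cls_def by auto
  then show "factors C f g"
    using factors_trans[OF cat factors_trans[OF cat _ \<open>factors C f' g'\<close> g'(1)] _ g(1)] by blast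
next
  assume "factors C f g"
  then show "leq (Psi C) A (cls C A f) (cls C A g)" unfolding Psi_def using f g by auto
qed

lemma re_Psi_cls:
  assumes cat: "category C" and wpb: "has_weak_pullbacks C"
    and h: "h \<in> arr C" and f: "f \<in> arr C" "ccod C f = ccod C h"
  obtains p q g where "re (Psi C) h (cls C (ccod C h) f) = cls C (cdom C h) p"
    and "is_wpb C h g p q" "factors C g f" "factors C f g"
proof -
  obtain p q where "is_wpb C h f p q" using wpb h f unfolding has_weak_pullbacks_def by metis
  then have "\<exists>p g q. g \<in> cls C (ccod C h) f \<and> is_wpb C h g p q" using cls_self[OF cat f(1)] f(2) by auto
  from someI_ex[OF this] obtain g q where
    "g \<in> cls C (ccod C h) f" "is_wpb C h g (SOME p. \<exists>g q. g \<in> cls C (ccod C h) f \<and> is_wpb C h g p q) q"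
    by blast
  then show thesis using that unfolding cls_def Psi_def by simp
qed

lemma class_doctrine_Psi:
  assumes "weak_hyperdoctrine C (Psi C) HPsi" and wpb: "has_weak_pullbacks C"
  shows "class_doctrine C (Psi C) HPsi (\<lambda>f. f \<in> arr C) (cls C)"
proof -
  interpret hyperdoctrine C "Psi C" HPsi using assms(1) by unfold_locales
  show ?thesis
  proof unfold_locales
    fix h f assume h: "h \<in> arr C" and f: "f \<in> arr C" "ccod C f = ccod C h"
    then obtain p q g where "re (Psi C) h (cls C (ccod C h) f) = cls C (cdom C h) p"
        and w: "is_wpb C h g p q" "factors C g f" "factors C f g"
      using re_Psi_cls[OF category wpb] by metis
    moreover have "p \<in> arr C" "ccod C p = cdom C h" using w(1) unfolding is_wpb_def by auto
    ultimately show "\<exists>p. p \<in> arr C \<and> ccod C p = cdom C h \<and> re (Psi C) h (cls C (ccod C h) f) = cls C (cdom C h) p \<and>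
         (\<forall>k\<in>arr C. ccod C k = cdom C h \<longrightarrow> (factors C k p \<longleftrightarrow> factors C (comp C h k) f))"
      using wpb_factors_iff[OF category w f(1)] by blast
  next
    fix f g assume "f \<in> arr C" "g \<in> arr C" "ccod C g = cdom C f"
    then show "comp C f g \<in> arr C" using category_comp[OF category] by blast
  next
    fix f assume "f \<in> arr C"
    then show "cls C (ccod C f) f \<in> fib (Psi C) (ccod C f)" unfolding Psi_def by auto
  next
    fix A u assume "A \<in> obj C" "u \<in> fib (Psi C) A"
    then show "\<exists>f. f \<in> arr C \<and> ccod C f = A \<and> u = cls C A f" unfolding Psi_def by auto
  next
    fix f g A assume "f \<in> arr C" "g \<in> arr C" "ccod C f = A" "ccod C g = A"
    then show "leq (Psi C) A (cls C A f) (cls C A g) \<longleftrightarrow> factors C f g"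
      using leq_Psi_cls_iff[OF category] by blast
  qed
qed

lemma monic_arr: "monic C m \<Longrightarrow> m \<in> arr C"
  unfolding monic_def by simp

lemma monic_cancel: "monic C m \<Longrightarrow> f \<in> arr C \<Longrightarrow> g \<in> arr C \<Longrightarrow> ccod C f = cdom C m \<Longrightarrow> ccod C g = cdom C m \<Longrightarrow>
    cdom C f = cdom C g \<Longrightarrow> comp C m f = comp C m g \<Longrightarrow> f = g"
  unfolding monic_def by blast

lemma monic_comp:
  assumes cat: "category C" and m: "monic C m" and n: "monic C n" and nm: "ccod C n = cdom C m"
  shows "monic C (comp C m n)"
proof -
  have ma: "m \<in> arr C" and na: "n \<in> arr C" using m n by (simp_all add: monic_arr)
  have mn: "comp C m n \<in> arr C" "cdom C (comp C m n) = cdom C n"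
    using category_comp[OF cat na ma nm] by auto
  show ?thesis unfolding monic_def
  proof (intro conjI ballI impI)
    fix x y assume x: "x \<in> arr C" and y: "y \<in> arr C"
      and "ccod C x = cdom C (comp C m n) \<and> ccod C y = cdom C (comp C m n) \<and> cdom C x = cdom C y \<and>
         comp C (comp C m n) x = comp C (comp C m n) y"
    then have xy: "ccod C x = cdom C n" "ccod C y = cdom C n" "cdom C x = cdom C y"
      and "comp C (comp C m n) x = comp C (comp C m n) y" using mn by auto
    then have "comp C m (comp C n x) = comp C m (comp C n y)"
      using category_comp_assoc[OF cat x na ma xy(1) nm] category_comp_assoc[OF cat y na ma xy(2) nm] by simp
    then have "comp C n x = comp C n y"
      using monic_cancel[OF m] category_comp[OF cat x na xy(1)] category_comp[OF cat y na xy(2)] nm xy(3)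
      by simp
    then show "x = y" using monic_cancel[OF n x y xy] by simp
  qed (fact mn(1))
qed

lemma is_pb_imp_is_wpb: "is_pb C f g p q \<Longrightarrow> is_wpb C f g p q"
  unfolding is_pb_def is_wpb_def by (metis (no_types, lifting))

lemma monic_pullback:
  assumes cat: "category C" and pb: "is_pb C h m p q" and m: "monic C m"
  shows "monic C p"
proof -
  have w: "h \<in> arr C" "m \<in> arr C" "p \<in> arr C" "q \<in> arr C" "cdom C p = cdom C q" "ccod C p = cdom C h"
    "ccod C q = cdom C m" "comp C h p = comp C m q"
    using pb unfolding is_pb_def by auto
  have univ: "\<forall>p' q'. p' \<in> arr C \<and> q' \<in> arr C \<and> cdom C p' = cdom C q' \<and> ccod C p' = cdom C h \<and>
      ccod C q' = cdom C m \<and> comp C h p' = comp C m q' \<longrightarrow>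
      (\<exists>!k. k \<in> arr C \<and> cdom C k = cdom C p' \<and> ccod C k = cdom C p \<and> comp C p k = p' \<and> comp C q k = q')"
    using pb unfolding is_pb_def by (elim conjE)
  show ?thesis unfolding monic_def
  proof (intro conjI ballI impI)
    fix x y assume x: "x \<in> arr C" and y: "y \<in> arr C"
      and "ccod C x = cdom C p \<and> ccod C y = cdom C p \<and> cdom C x = cdom C y \<and> comp C p x = comp C p y"
    then have xy: "ccod C x = cdom C p" "ccod C y = cdom C p" "cdom C x = cdom C y"
      and pxy: "comp C p x = comp C p y" by auto
    have cone: "comp C m (comp C q x) = comp C h (comp C p x)" "comp C m (comp C q y) = comp C h (comp C p y)"
      using category_comp_assoc[OF cat x w(3) w(1)] category_comp_assoc[OF cat x w(4) w(2)]
        category_comp_assoc[OF cat y w(3) w(1)] category_comp_assoc[OF cat y w(4) w(2)] w xy by simp_all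
    then have qxy: "comp C q x = comp C q y"
      using monic_cancel[OF m] category_comp[OF cat x w(4)] category_comp[OF cat y w(4)] w xy pxy by simp
    have "\<exists>!k. k \<in> arr C \<and> cdom C k = cdom C (comp C p x) \<and> ccod C k = cdom C p \<and>
        comp C p k = comp C p x \<and> comp C q k = comp C q x"
      using univ[rule_format, of "comp C p x" "comp C q x"] cone(1) category_comp[OF cat x w(3)]
        category_comp[OF cat x w(4)] w xy by simp
    then show "x = y"
      using x y xy pxy qxy category_comp[OF cat x w(3)] w by (metis (no_types, lifting))
  qed (fact w(3))
qed

lemma msub_self: "category C \<Longrightarrow> monic C m \<Longrightarrow> m \<in> msub C (ccod C m) m"
  unfolding msub_def using factors_refl[of C m] monic_arr[of C m] by simp

lemma leq_Sub_msub_iff: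
  assumes cat: "category C" and m: "monic C m" "ccod C m = A" and n: "monic C n" "ccod C n = A"
  shows "leq (Sub C) A (msub C A m) (msub C A n) \<longleftrightarrow> factors C m n"
proof
  assume "leq (Sub C) A (msub C A m) (msub C A n)"
  then obtain m' n' where n': "monic C n'" "ccod C n' = A"
      and eq: "msub C A m = msub C A m'" "msub C A n = msub C A n'" and "factors C m' n'"
    unfolding Sub_def by auto
  have "m \<in> msub C A m'" "n' \<in> msub C A n"
    using msub_self[OF cat m(1)] msub_self[OF cat n'(1)] m(2) n'(2) eq by simp_all
  then have "factors C m m'" "factors C n' n" unfolding msub_def by auto
  then show "factors C m n"
    using factors_trans[OF cat factors_trans[OF cat _ \<open>factors C m' n'\<close> monic_arr[OF n'(1)]] _
        monic_arr[OF n(1)]]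
    by blast
next
  assume "factors C m n"
  then show "leq (Sub C) A (msub C A m) (msub C A n)" unfolding Sub_def using m n by auto
qed

lemma re_Sub_msub:
  assumes cat: "category C" and mpb: "has_mono_pullbacks C"
    and h: "h \<in> arr C" and m: "monic C m" "ccod C m = ccod C h"
  obtains p q n where "re (Sub C) h (msub C (ccod C h) m) = msub C (cdom C h) p"
    and "is_pb C h n p q" "monic C n" "factors C n m" "factors C m n"
proof -
  obtain p q where "is_pb C h m p q" using mpb h m unfolding has_mono_pullbacks_def by metis
  then have "\<exists>p n q. n \<in> msub C (ccod C h) m \<and> is_pb C h n p q" using msub_self[OF cat m(1)] m(2) by auto
  from someI_ex[OF this] obtain n q where
    "n \<in> msub C (ccod C h) m" "is_pb C h n (SOME p. \<exists>n q. n \<in> msub C (ccod C h) m \<and> is_pb C h n p q) q"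
    by blast
  then show thesis using that unfolding msub_def Sub_def by simp
qed

lemma class_doctrine_Sub:
  assumes "weak_hyperdoctrine C (Sub C) HSub" and mpb: "has_mono_pullbacks C"
  shows "class_doctrine C (Sub C) HSub (monic C) (msub C)"
proof -
  interpret hyperdoctrine C "Sub C" HSub using assms(1) by unfold_locales
  show ?thesis
  proof unfold_locales
    fix h m assume h: "h \<in> arr C" and m: "monic C m" "ccod C m = ccod C h"
    then obtain p q n where "re (Sub C) h (msub C (ccod C h) m) = msub C (cdom C h) p"
        and pb: "is_pb C h n p q" and n: "monic C n" "factors C n m" "factors C m n"
      using re_Sub_msub[OF category mpb] by metis
    moreover have "monic C p" using monic_pullback[OF category pb n(1)] .
    moreover have "ccod C p = cdom C h" using pb unfolding is_pb_def by auto
    ultimately show "\<exists>p. monic C p \<and> ccod C p = cdom C h \<and> re (Sub C) h (msub C (ccod C h) m) = msub C (cdom C h) p \<and>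
         (\<forall>k\<in>arr C. ccod C k = cdom C h \<longrightarrow> (factors C k p \<longleftrightarrow> factors C (comp C h k) m))"
      using wpb_factors_iff[OF category is_pb_imp_is_wpb[OF pb] n(2,3) monic_arr[OF m(1)]] by blast
  next
    fix m n assume "monic C m" "monic C n" "ccod C n = cdom C m"
    then show "monic C (comp C m n)" using monic_comp[OF category] by blast
  next
    fix m assume "monic C m"
    then show "msub C (ccod C m) m \<in> fib (Sub C) (ccod C m)" unfolding Sub_def by auto
  next
    fix A u assume "A \<in> obj C" "u \<in> fib (Sub C) A"
    then show "\<exists>m. monic C m \<and> ccod C m = A \<and> u = msub C A m" unfolding Sub_def by auto
  next
    fix m n A assume "monic C m" "monic C n" "ccod C m = A" "ccod C n = A"
    then show "leq (Sub C) A (msub C A m) (msub C A n) \<longleftrightarrow> factors C m n"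
      using leq_Sub_msub_iff[OF category] by blast
  qed (fact monic_arr)
qed

lemma comprehension_classes_Psi:
  assumes "weak_hyperdoctrine C P H" "full_weak_comprehensions C P H"
    and "weak_hyperdoctrine C (Psi C) HPsi" "has_weak_pullbacks C"
  shows "comprehension_classes C (Psi C) HPsi (\<lambda>f. f \<in> arr C) (cls C) P H"
proof -
  interpret class_doctrine C "Psi C" HPsi "\<lambda>f. f \<in> arr C" "cls C"
    using class_doctrine_Psi assms(3,4) .
  show ?thesis
  proof unfold_locales
    fix A a assume "A \<in> obj C" "a \<in> fib P A"
    then obtain c where "is_wcomp C P H A a c" using assms(2) unfolding full_weak_comprehensions_def by blast
    then show "\<exists>c. is_wcomp C P H A a c \<and> c \<in> arr C" unfolding is_wcomp_def by blast
  qed (use assms(1,2) in simp_all)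
qed

lemma comprehension_classes_Sub:
  assumes "weak_hyperdoctrine C P H" "full_weak_comprehensions C P H" "strong_comprehensions C P H"
    and "weak_hyperdoctrine C (Sub C) HSub" "has_mono_pullbacks C"
  shows "comprehension_classes C (Sub C) HSub (monic C) (msub C) P H"
proof -
  interpret class_doctrine C "Sub C" HSub "monic C" "msub C"
    using class_doctrine_Sub assms(4,5) .
  show ?thesis
    using assms(1-3) by unfold_locales (auto simp: strong_comprehensions_def)
qed

theorem corollary2p5:
  fixes C :: "('o, 'm) wcat" and P :: "('o, 'm, 'p) doct" and H :: "('o, 'p) hops"
    and HPsi :: "('o, 'm set) hops" and HSub :: "('o, 'm set) hops"
  assumes "weak_hyperdoctrine C P H"
    and "full_weak_comprehensions C P H"
    and "comprehensive_diagonals C P H"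
    and "has_weak_pullbacks C"
    and "weak_hyperdoctrine C (Psi C) HPsi"
  shows
   "(\<forall>X\<in>obj C. \<forall>Y\<in>obj C. \<forall>a\<in>fib P (prd C X Y). \<forall>c d.
        is_wcomp C P H X (hall H X Y a) c \<and> is_wcomp C P H (prd C X Y) a d \<longrightarrow>
        cls C X c = hall HPsi X Y (cls C (prd C X Y) d)) \<and>
    (\<forall>A\<in>obj C. \<forall>g\<in>fib P A. \<forall>b\<in>fib P A. \<forall>c d e.
        is_wcomp C P H A (himp H A g b) c \<and> is_wcomp C P H A g d \<and> is_wcomp C P H A b e \<longrightarrow>
        cls C A c = himp HPsi A (cls C A d) (cls C A e)) \<and>
    (strong_comprehensions C P H \<and> has_mono_pullbacks C \<and> weak_hyperdoctrine C (Sub C) HSub \<longrightarrow>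
      (\<forall>X\<in>obj C. \<forall>Y\<in>obj C. \<forall>a\<in>fib P (prd C X Y). \<forall>c d.
          is_wcomp C P H X (hall H X Y a) c \<and> monic C c \<and>
          is_wcomp C P H (prd C X Y) a d \<and> monic C d \<longrightarrow>
          msub C X c = hall HSub X Y (msub C (prd C X Y) d)) \<and>
      (\<forall>A\<in>obj C. \<forall>g\<in>fib P A. \<forall>b\<in>fib P A. \<forall>c d e.
          is_wcomp C P H A (himp H A g b) c \<and> monic C c \<and> is_wcomp C P H A g d \<and> monic C d \<and>
          is_wcomp C P H A b e \<and> monic C e \<longrightarrow>
          msub C A c = himp HSub A (msub C A d) (msub C A e)))"
proof -
  interpret Psi: comprehension_classes C "Psi C" HPsi "\<lambda>f. f \<in> arr C" "cls C" P H
    using comprehension_classes_Psi assms(1,2,5,4) .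
  have Sub: "comprehension_classes C (Sub C) HSub (monic C) (msub C) P H"
    if "strong_comprehensions C P H \<and> has_mono_pullbacks C \<and> weak_hyperdoctrine C (Sub C) HSub"
    using comprehension_classes_Sub assms(1,2) that by blast
  have wcomp_arr: "\<And>A a c. is_wcomp C P H A a c \<Longrightarrow> c \<in> arr C" by (simp add: is_wcomp_def)
  show ?thesis
    using Psi.wcomp_all_eq Psi.wcomp_imp_eq wcomp_arr
      comprehension_classes.wcomp_all_eq[OF Sub] comprehension_classes.wcomp_imp_eq[OF Sub]
    by (intro conjI impI ballI allI; elim conjE) metis+
qed

end
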